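(* For every integer $i\ge 2$, $\overline{\alpha}(\{1,3,2i\})=\frac{i}{2i+3}$.
   Context: For a finite set $S$ of positive integers, the distance graph $G(S)$ has vertex set $\mathbb{Z}$, with $i,j$ adjacent iff $|i-j|\in S$. The density of $A\subseteq\mathbb{Z}$ is $\delta(A)=\limsup_{N\to\infty}\frac{|A\cap[-N,N]|}{2N+1}$, and the independence ratio $\overline{\alpha}(S)$ is the supremum of $\delta(A)$ over independent sets $A$ of $G(S)$. *)

theory Defs
  imports "HOL-Analysis.Analysis"
begin

definition dist_adj :: "nat set \<Rightarrow> int \<Rightarrow> int \<Rightarrow> bool" where
  "dist_adj S i j \<longleftrightarrow> nat \<bar>i - j\<bar> \<in> S"

definition dist_independent :: "nat set \<Rightarrow> int set \<Rightarrow> bool" where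
  "dist_independent S A \<longleftrightarrow> (\<forall>i\<in>A. \<forall>j\<in>A. \<not> dist_adj S i j)"

definition upper_density :: "int set \<Rightarrow> ereal" where
  "upper_density A = limsup (\<lambda>N::nat. ereal (real (card (A \<inter> {- int N .. int N})) / real (2 * N + 1)))"

definition independence_ratio :: "nat set \<Rightarrow> ereal" where
  "independence_ratio S = (SUP A \<in> {A. dist_independent S A}. upper_density A)"

end

theory Submission
  imports Defs "HOL-Real_Asymp.Real_Asymp"
begin

(*
  Independent sets of G({1,3,2i}) have at most i elements in any 2i+3 consecutive integers.
  Consecutive elements of a set avoiding the differences 1 and 3 are 2 or at least 4 apart, so
  i+1 such elements span at least 2i, and if they span less than 2i+2 they form a progression of
  step 2. So i+1 independent elements in a window of length 2i+3 span 2i, which is excluded, or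
  2i+2; then removing the largest element leaves either a pair at distance 2i or a tight
  progression containing the minimum plus 2, which is at distance 2i from the maximum.
  Tiling [-N,N] by such windows gives the upper bound; the integers congruent to 0, 2, ..., 2i-2
  modulo 2i+3 form an independent set of density i/(2i+3).
*)

lemma dist_independent_mono:
  assumes "dist_independent S A" "T \<subseteq> S" "B \<subseteq> A"
  shows "dist_independent T B"
  using assms unfolding dist_independent_def dist_adj_def by blast

lemma dist_independent_diff_notin:
  assumes "dist_independent S A" "x \<in> A" "y \<in> A" "x < y"
  shows "nat (y - x) \<notin> S"
  using assms unfolding dist_independent_def dist_adj_def by (metis abs_of_pos diff_gt_0_iff_gt)

lemma dist_independent_1_3_gap:
  assumes "dist_independent {1, 3} A" "x \<in> A" "y \<in> A" "x < y"
  shows "y - x = 2 \<or> 4 \<le> y - x"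
  using dist_independent_diff_notin[OF assms] assms(4) by (auto simp: nat_eq_iff)

lemma Min_Max_insert_above:
  fixes A :: "'a::linorder set"
  assumes "finite A" "A \<noteq> {}" "\<forall>a\<in>A. a < b"
  shows "Min (insert b A) = Min A" "Max (insert b A) = b"
proof -
  have "Min A < b" "Max A < b" using assms by simp_all
  then show "Min (insert b A) = Min A" "Max (insert b A) = b" using assms by simp_all
qed

lemma dist_independent_1_3_Max_ge:
  fixes B :: "int set"
  assumes "finite B" "dist_independent {1, 3} B" "card B = Suc m"
  shows "Min B + 2 * int m \<le> Max B"
  using assms
proof (induction B arbitrary: m rule: finite_linorder_max_induct)
  case empty
  then show ?case by simp
next
  case (insert b B)
  show ?case
  proof (cases "B = {}")
    case True
    then show ?thesis using insert.prems by simp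
  next
    case False
    have "b \<notin> B" using insert.hyps by blast
    then obtain m' where m: "m = Suc m'" "card B = Suc m'"
      using insert.prems insert.hyps False by (cases m) auto
    have "dist_independent {1, 3} B"
      by (rule dist_independent_mono[OF insert.prems(1)]) auto
    then have "Min B + 2 * int m' \<le> Max B" using insert.IH m by blast
    moreover have "Max B \<in> B" "Max B < b" using insert.hyps False by auto
    moreover have "b - Max B = 2 \<or> 4 \<le> b - Max B"
      using dist_independent_1_3_gap[OF insert.prems(1)] \<open>Max B \<in> B\<close> \<open>Max B < b\<close> by blast
    ultimately show ?thesis
      using Min_Max_insert_above[OF insert.hyps(1) False insert.hyps(2)] m by auto
  qed
qed

lemma dist_independent_1_3_eq_progression:
  fixes B :: "int set"
  assumes "finite B" "dist_independent {1, 3} B" "card B = Suc m"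
    and "Max B < Min B + 2 * int m + 2"
  shows "B = (\<lambda>k. Min B + 2 * int k) ` {..m}"
  using assms
proof (induction B arbitrary: m rule: finite_linorder_max_induct)
  case empty
  then show ?case by simp
next
  case (insert b B)
  show ?case
  proof (cases "B = {}")
    case True
    then show ?thesis using insert.prems by simp
  next
    case False
    note Min_Max = Min_Max_insert_above[OF insert.hyps(1) False insert.hyps(2)]
    have "b \<notin> B" using insert.hyps by blast
    then obtain m' where m: "m = Suc m'" "card B = Suc m'"
      using insert.prems insert.hyps False by (cases m) auto
    have indep: "dist_independent {1, 3} B"
      by (rule dist_independent_mono[OF insert.prems(1)]) auto
    have "Max B \<in> B" "Max B < b" using insert.hyps False by auto
    then have "b - Max B = 2 \<or> 4 \<le> b - Max B"
      using dist_independent_1_3_gap[OF insert.prems(1)] by blast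
    moreover have "Min B + 2 * int m' \<le> Max B"
      using dist_independent_1_3_Max_ge[OF insert.hyps(1) indep m(2)] .
    ultimately have gap: "b = Max B + 2" and "Max B < Min B + 2 * int m' + 2"
      using insert.prems(3) Min_Max m by auto
    then have B: "B = (\<lambda>k. Min B + 2 * int k) ` {..m'}"
      using insert.IH[OF indep m(2)] by blast
    have "Max B = Min B + 2 * int m'"
      using \<open>Max B \<in> B\<close> \<open>Min B + 2 * int m' \<le> Max B\<close> by (subst (asm) B) auto
    then show ?thesis
      using gap Min_Max m by (subst B) (simp add: atMost_Suc algebra_simps)
  qed
qed

lemma dist_independent_1_3_ex_diff:
  fixes C :: "int set"
  assumes "finite C" "dist_independent {1, 3} C" "card C = Suc m" "2 \<le> m"
    and "Max C \<le> Min C + 2 * int m + 2"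
  shows "\<exists>u\<in>C. \<exists>v\<in>C. v - u = 2 * int m"
proof -
  define x y where "x = Min C" and "y = Max C"
  have "C \<noteq> {}" using assms(3) by auto
  then have "x \<in> C" "y \<in> C" using assms(1) unfolding x_def y_def by simp_all
  have "x + 2 * int m \<le> y"
    using dist_independent_1_3_Max_ge[OF assms(1-3)] unfolding x_def y_def .
  moreover have "y \<noteq> x + 2 * int m + 1"
  proof
    assume "y = x + 2 * int m + 1"
    then have "C = (\<lambda>k. x + 2 * int k) ` {..m}"
      using dist_independent_1_3_eq_progression[OF assms(1-3)] unfolding x_def y_def by simp
    then show False using \<open>y \<in> C\<close> \<open>y = x + 2 * int m + 1\<close> by auto
  qed
  ultimately consider "y = x + 2 * int m" | "y = x + 2 * int m + 2"
    using assms(5) unfolding x_def y_def by linarith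
  then show ?thesis
  proof cases
    case 1
    then have "y - x = 2 * int m" by simp
    then show ?thesis using \<open>x \<in> C\<close> \<open>y \<in> C\<close> by blast
  next
    case 2
    define C' where "C' = C - {y}"
    have C_eq: "C = insert y C'" and below: "\<forall>c\<in>C'. c < y"
      using \<open>y \<in> C\<close> assms(1) unfolding C'_def y_def
      by (auto simp: order.not_eq_order_implies_strict)
    have fin': "finite C'" and card': "card C' = Suc (m - 1)"
      using assms(1,3,4) \<open>y \<in> C\<close> unfolding C'_def by auto
    then have "C' \<noteq> {}" by auto
    have indep': "dist_independent {1, 3} C'"
      by (rule dist_independent_mono[OF assms(2)]) (auto simp: C'_def)
    have Min': "Min C' = x"
      using Min_Max_insert_above(1)[OF fin' \<open>C' \<noteq> {}\<close> below] C_eq unfolding x_def by simp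
    have "Max C' \<in> C'" "Max C' < y" using fin' \<open>C' \<noteq> {}\<close> below by auto
    then have "y - Max C' = 2 \<or> 4 \<le> y - Max C'"
      using dist_independent_1_3_gap[OF assms(2)] C_eq by blast
    then show ?thesis
    proof
      assume "y - Max C' = 2"
      then have "Max C' - x = 2 * int m" using 2 by simp
      then show ?thesis using \<open>x \<in> C\<close> \<open>Max C' \<in> C'\<close> C_eq by blast
    next
      assume "4 \<le> y - Max C'"
      then have "C' = (\<lambda>k. x + 2 * int k) ` {..m - 1}"
        using dist_independent_1_3_eq_progression[OF fin' indep' card'] Min' 2 assms(4) by simp
      then have "x + 2 \<in> C'" using assms(4) by (auto intro!: image_eqI[of _ _ 1])
      moreover have "y - (x + 2) = 2 * int m" using 2 by simp
      ultimately show ?thesis using \<open>y \<in> C\<close> C_eq by blast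
    qed
  qed
qed

lemma card_Int_window_le_if_dist_independent:
  assumes "2 \<le> i" "dist_independent {1, 3, 2 * i} A"
  shows "card (A \<inter> {a..<a + int (2 * i + 3)}) \<le> i"
proof (rule ccontr)
  assume "\<not> ?thesis"
  then obtain C where C: "C \<subseteq> A \<inter> {a..<a + int (2 * i + 3)}" "card C = Suc i"
    by (meson not_le Suc_leI obtain_subset_with_card_n)
  have "finite C" "C \<noteq> {}" using C(2) card.infinite by fastforce+
  then have "Min C \<in> C" "Max C \<in> C" by simp_all
  then have "a \<le> Min C" "Max C < a + int (2 * i + 3)" using C(1) by auto
  moreover have indep: "dist_independent {1, 3, 2 * i} C"
    by (rule dist_independent_mono[OF assms(2)]) (use C in auto)
  moreover have "dist_independent {1, 3} C"
    by (rule dist_independent_mono[OF indep]) auto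
  ultimately have "\<exists>u\<in>C. \<exists>v\<in>C. v - u = 2 * int i"
    by (intro dist_independent_1_3_ex_diff[OF \<open>finite C\<close> _ C(2) assms(1)]) simp_all
  then obtain u v where "u \<in> C" "v \<in> C" "v - u = 2 * int i" by blast
  then show False
    using dist_independent_diff_notin[OF indep, of u v] assms(1) by (simp add: nat_mult_distrib)
qed

lemma card_Int_atLeastLessThan_eq_sum_windows:
  fixes A :: "int set" and p :: int
  assumes "0 \<le> p"
  shows "card (A \<inter> {a..<a + p * int q}) = (\<Sum>k<q. card (A \<inter> {a + p * int k..<a + p * int k + p}))"
proof (induction q)
  case 0
  then show ?case by simp
next
  case (Suc q)
  have "0 \<le> p * int q" using assms by simp
  then have "{a..<a + p * int (Suc q)} = {a..<a + p * int q} \<union> {a + p * int q..<a + p * int q + p}"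
    using assms by (simp add: ivl_disj_un_two(3) algebra_simps)
  then show ?case
    using Suc.IH by (simp add: Int_Un_distrib card_Un_disjoint disjoint_iff)
qed

lemma card_Int_interval_le_if_dist_independent:
  assumes "2 \<le> i" "dist_independent {1, 3, 2 * i} A"
  shows "real (card (A \<inter> {- int N..int N})) \<le> real i / real (2 * i + 3) * real (2 * N + 1) + real i"
proof -
  define p where "p = 2 * i + 3"
  define q where "q = (2 * N + 1) div p + 1"
  have "2 * N + 1 < p * q"
    using dividend_less_times_div[of p "2 * N + 1"] unfolding p_def q_def by simp
  then have "{- int N..int N} \<subseteq> {- int N..<- int N + int p * int q}"
    by (auto simp flip: of_nat_mult)
  then have "card (A \<inter> {- int N..int N}) \<le> card (A \<inter> {- int N..<- int N + int p * int q})"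
    by (intro card_mono) auto
  also have "\<dots> = (\<Sum>k<q. card (A \<inter> {- int N + int p * int k..<- int N + int p * int k + int p}))"
    by (rule card_Int_atLeastLessThan_eq_sum_windows) simp
  also have "\<dots> \<le> (\<Sum>k<q. i)"
    by (intro sum_mono) (use card_Int_window_le_if_dist_independent[OF assms] in \<open>simp add: p_def\<close>)
  finally have "real (card (A \<inter> {- int N..int N})) \<le> real q * real i"
    by (simp flip: of_nat_mult)
  also have "\<dots> \<le> (real (2 * N + 1) / real p + 1) * real i"
    unfolding q_def using of_nat_div_le_of_nat[of "2 * N + 1" p] by (intro mult_right_mono) auto
  finally show ?thesis by (simp add: p_def algebra_simps)
qed

lemma upper_density_le_if_card_le:
  assumes "\<And>N. real (card (A \<inter> {- int N..int N})) \<le> c * real (2 * N + 1) + K"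
  shows "upper_density A \<le> ereal c"
proof -
  have "real (card (A \<inter> {- int N..int N})) / real (2 * N + 1) \<le> c + K / real (2 * N + 1)" for N
    using divide_right_mono[OF assms[of N], of "real (2 * N + 1)"] by (simp add: add_divide_distrib)
  then have "upper_density A \<le> limsup (\<lambda>N. ereal (c + K / real (2 * N + 1)))"
    unfolding upper_density_def by (intro Limsup_mono always_eventually) simp
  also have "\<dots> = ereal c"
    by (intro lim_imp_Limsup tendsto_ereal) (simp, real_asymp)
  finally show ?thesis .
qed

lemma upper_density_ge_if_card_ge:
  assumes "\<And>N. c * real (2 * N + 1) - K \<le> real (card (A \<inter> {- int N..int N}))"
  shows "ereal c \<le> upper_density A"
proof -
  have le: "c - K / real (2 * N + 1) \<le> real (card (A \<inter> {- int N..int N})) / real (2 * N + 1)" for N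
    using divide_right_mono[OF assms[of N], of "real (2 * N + 1)"] by (simp add: diff_divide_distrib)
  have "ereal c = liminf (\<lambda>N. ereal (c - K / real (2 * N + 1)))"
    by (intro lim_imp_Liminf[symmetric] tendsto_ereal) (simp, real_asymp)
  also have "\<dots> \<le> liminf (\<lambda>N. ereal (real (card (A \<inter> {- int N..int N})) / real (2 * N + 1)))"
    using le by (intro Liminf_mono always_eventually) simp
  also have "\<dots> \<le> upper_density A"
    unfolding upper_density_def by (rule Liminf_le_Limsup) simp
  finally show ?thesis .
qed

definition extremal_set :: "nat \<Rightarrow> int set" where
  "extremal_set i = {int (2 * i + 3) * k + 2 * int j | k j. j < i}"

lemma extremal_set_diff_notin:
  fixes d :: int
  assumes "j < i" "j' < i"
  shows "int (2 * i + 3) * d + 2 * int j - 2 * int j' \<notin> {1, 3, 2 * int i}"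
proof -
  consider "d \<le> -1" | "d = 0" | "d = 1" | "2 \<le> d" by linarith
  then show ?thesis
  proof cases
    case 1
    then have "int (2 * i + 3) * d \<le> int (2 * i + 3) * (-1)" by (intro mult_left_mono) auto
    then show ?thesis using assms by auto
  next
    case 4
    then have "int (2 * i + 3) * 2 \<le> int (2 * i + 3) * d" by (intro mult_left_mono) auto
    then show ?thesis using assms by auto
  qed (use assms in \<open>simp; presburger\<close>)+
qed

lemma dist_independent_extremal_set: "dist_independent {1, 3, 2 * i} (extremal_set i)"
  unfolding dist_independent_def dist_adj_def
proof (intro ballI notI)
  fix x y
  assume "x \<in> extremal_set i" "y \<in> extremal_set i" and adj: "nat \<bar>x - y\<bar> \<in> {1, 3, 2 * i}"
  then obtain k j k' j' where "j < i" "j' < i"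
    and x: "x = int (2 * i + 3) * k + 2 * int j" and y: "y = int (2 * i + 3) * k' + 2 * int j'"
    unfolding extremal_set_def by blast
  have "x - y \<in> {1, 3, 2 * int i} \<or> y - x \<in> {1, 3, 2 * int i}"
    using adj by (cases "x < y") (auto simp: nat_eq_iff)
  moreover have "x - y = int (2 * i + 3) * (k - k') + 2 * int j - 2 * int j'"
    and "y - x = int (2 * i + 3) * (k' - k) + 2 * int j' - 2 * int j"
    unfolding x y by (simp_all add: algebra_simps)
  ultimately show False
    using extremal_set_diff_notin[OF \<open>j < i\<close> \<open>j' < i\<close>] extremal_set_diff_notin[OF \<open>j' < i\<close> \<open>j < i\<close>]
    by metis
qed

lemma card_extremal_set_Int_window:
  fixes i :: nat and k :: int
  defines "p \<equiv> int (2 * i + 3)"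
  shows "card (extremal_set i \<inter> {p * k..<p * k + p}) = i"
proof -
  have "extremal_set i \<inter> {p * k..<p * k + p} = (\<lambda>j. p * k + 2 * int j) ` {..<i}"
  proof (intro equalityI subsetI)
    fix x
    assume "x \<in> extremal_set i \<inter> {p * k..<p * k + p}"
    then obtain k' j where "j < i" and x: "x = p * k' + 2 * int j" "p * k \<le> x" "x < p * k + p"
      unfolding extremal_set_def p_def by auto
    have div_eq: "(p * k'' + r) div p = k''" if "0 \<le> r" "r < p" for k'' r
      using that by simp
    have "k' = k"
      using div_eq[of "2 * int j" k'] div_eq[of "x - p * k" k] \<open>j < i\<close> x unfolding p_def by simp
    then show "x \<in> (\<lambda>j. p * k + 2 * int j) ` {..<i}" using \<open>j < i\<close> x(1) by auto
  next
    fix x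
    assume "x \<in> (\<lambda>j. p * k + 2 * int j) ` {..<i}"
    then show "x \<in> extremal_set i \<inter> {p * k..<p * k + p}"
      unfolding extremal_set_def p_def by auto
  qed
  moreover have "inj_on (\<lambda>j. p * k + 2 * int j) {..<i}" by (rule inj_onI) simp
  ultimately show ?thesis by (simp add: card_image)
qed

lemma card_extremal_set_Int_interval_ge:
  "real i / real (2 * i + 3) * real (2 * N + 1) - 2 * real i
     \<le> real (card (extremal_set i \<inter> {- int N..int N}))"
proof -
  define p where "p = 2 * i + 3"
  define m where "m = N div p"
  have "p * m \<le> N" unfolding m_def by simp
  then have "{- int (p * m)..<- int (p * m) + int p * int (2 * m)} \<subseteq> {- int N..int N}"
    by (auto simp flip: of_nat_mult)
  then have "card (extremal_set i \<inter> {- int (p * m)..<- int (p * m) + int p * int (2 * m)})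
      \<le> card (extremal_set i \<inter> {- int N..int N})"
    by (intro card_mono) auto
  moreover have "card (extremal_set i \<inter> {- int (p * m)..<- int (p * m) + int p * int (2 * m)})
      = (\<Sum>k<2 * m. i)"
    unfolding card_Int_atLeastLessThan_eq_sum_windows[OF of_nat_0_le_iff]
    using card_extremal_set_Int_window[of i "int _ - int m"]
    by (intro sum.cong) (simp_all add: p_def algebra_simps)
  ultimately have "2 * m * i \<le> card (extremal_set i \<inter> {- int N..int N})"
    by simp
  then have count: "real (2 * m * i) \<le> real (card (extremal_set i \<inter> {- int N..int N}))"
    by (simp only: of_nat_le_iff)
  have "N < p + p * m"
    using dividend_less_times_div[of p N] unfolding p_def m_def by simp
  then have "2 * N + 1 \<le> 2 * p * (m + 1)" by (simp add: algebra_simps)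
  then have "real (2 * N + 1) \<le> real (2 * p * (m + 1))" by (simp only: of_nat_le_iff)
  then have "real i / real p * real (2 * N + 1) - 2 * real i
      \<le> real i / real p * (2 * real p * (real m + 1)) - 2 * real i"
    by (intro diff_right_mono mult_left_mono) (simp_all add: algebra_simps)
  also have "\<dots> = real (2 * m * i)" unfolding p_def by (simp add: field_simps)
  also note count
  finally show ?thesis by (simp add: p_def)
qed

theorem theorem27:
  fixes i :: nat
  assumes "i \<ge> 2"
  shows "independence_ratio {1, 3, 2 * i} = ereal (real i / real (2 * i + 3))"
proof (rule antisym)
  show "independence_ratio {1, 3, 2 * i} \<le> ereal (real i / real (2 * i + 3))"
    unfolding independence_ratio_def
    using card_Int_interval_le_if_dist_independent[OF assms]
    by (intro SUP_least upper_density_le_if_card_le) auto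
  have "ereal (real i / real (2 * i + 3)) \<le> upper_density (extremal_set i)"
    by (rule upper_density_ge_if_card_ge) (rule card_extremal_set_Int_interval_ge)
  then show "ereal (real i / real (2 * i + 3)) \<le> independence_ratio {1, 3, 2 * i}"
    unfolding independence_ratio_def
    using dist_independent_extremal_set by (intro SUP_upper2) auto
qed

end
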